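(* Let $A$ be a set with a ternary operation $p\colon A^3\to A$ and two constants $0,1\in A$ satisfying, for all $a,b,c,b_1,b_2,b_3\in A$: (T1) $p(0,a,1)=a$; (T2) $p(a,b,a)=a$; (T3) $p(a,p(b_1,b_2,b_3),c)=p(p(a,b_1,c),b_2,p(a,b_3,c))$; (T4) $p(a,0,b)=a=p(b,1,a)$. Define $\bar{a}=p(1,a,0)$, $a\cdot b=p(0,a,b)$ and $a+b=p(a,b,\bar a)$. Then the following conditions are equivalent: (i) $(A,+,\cdot,0,1)$ is a unitary ring of characteristic $2$; (ii) $p(a,b,c)=(\bar b\cdot a)+(b\cdot c)$ for all $a,b,c\in A$; (iii) $a\cdot(b+c)=(a\cdot b)+(a\cdot c)$ for all $a,b,c\in A$.
   Context: A unitary ring of characteristic $2$ here means an associative ring with additive identity $0$ and multiplicative identity $1$ (not necessarily commutative) such that $b+b=0$ for all elements $b$. *)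

theory Defs
  imports Main
begin

definition unitary_ring_char2 ::
  "'a set \<Rightarrow> ('a \<Rightarrow> 'a \<Rightarrow> 'a) \<Rightarrow> ('a \<Rightarrow> 'a \<Rightarrow> 'a) \<Rightarrow> 'a \<Rightarrow> 'a \<Rightarrow> bool" where
  "unitary_ring_char2 A add mul z u \<longleftrightarrow>
     z \<in> A \<and> u \<in> A \<and>
     (\<forall>a\<in>A. \<forall>b\<in>A. add a b \<in> A \<and> mul a b \<in> A) \<and>
     (\<forall>a\<in>A. \<forall>b\<in>A. \<forall>c\<in>A. add (add a b) c = add a (add b c)) \<and>
     (\<forall>a\<in>A. \<forall>b\<in>A. add a b = add b a) \<and>
     (\<forall>a\<in>A. add z a = a) \<and>
     (\<forall>a\<in>A. \<exists>b\<in>A. add a b = z) \<and>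
     (\<forall>a\<in>A. \<forall>b\<in>A. \<forall>c\<in>A. mul (mul a b) c = mul a (mul b c)) \<and>
     (\<forall>a\<in>A. mul u a = a \<and> mul a u = a) \<and>
     (\<forall>a\<in>A. \<forall>b\<in>A. \<forall>c\<in>A. mul a (add b c) = add (mul a b) (mul a c)) \<and>
     (\<forall>a\<in>A. \<forall>b\<in>A. \<forall>c\<in>A. mul (add a b) c = add (mul a c) (mul b c)) \<and>
     (\<forall>b\<in>A. add b b = z)"

end

(* Everything comes from instantiating the middle-argument distributivity (T3). With no further
   hypothesis, + is associative with neutral element 0, multiplication is associative with unit 1,
   and a |-> \bar a is an involution commuting with p, which turns \bar b + b = 1 into b + b = 0.
   Each of (i), (ii), (iii) forces b + b = 0 (for (ii) and (iii) by evaluating at 1). In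
   characteristic 2, + is a group of exponent 2, hence abelian; right distributivity holds;
   and p(a,b,c) = a + b(a + c), \bar b a = a + ba, so (ii) at (a,b,c) and (iii) at (b,a,c)
   differ only by cancelling a. Thus (i), (ii), (iii) are all equivalent to left distributivity. *)

theory Submission
  imports Defs
begin

lemma unitary_ring_char2_left_distrib:
  "unitary_ring_char2 A add mul z u \<Longrightarrow> a \<in> A \<Longrightarrow> b \<in> A \<Longrightarrow> c \<in> A \<Longrightarrow>
    mul a (add b c) = add (mul a b) (mul a c)"
  by (simp add: unitary_ring_char2_def)

lemma unitary_ring_char2_add_self:
  "unitary_ring_char2 A add mul z u \<Longrightarrow> a \<in> A \<Longrightarrow> add a a = z"
  by (simp add: unitary_ring_char2_def)

locale ternary =
  fixes A :: "'a set" and p :: "'a \<Rightarrow> 'a \<Rightarrow> 'a \<Rightarrow> 'a" and z u :: 'a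
  assumes p_closed [simp]: "\<lbrakk>a \<in> A; b \<in> A; c \<in> A\<rbrakk> \<Longrightarrow> p a b c \<in> A"
    and z_in [simp]: "z \<in> A" and u_in [simp]: "u \<in> A"
    and p_z_u: "a \<in> A \<Longrightarrow> p z a u = a"
    and p_idem: "a \<in> A \<Longrightarrow> b \<in> A \<Longrightarrow> p a b a = a"
    and p_middle: "\<lbrakk>a \<in> A; b1 \<in> A; b2 \<in> A; b3 \<in> A; c \<in> A\<rbrakk> \<Longrightarrow>
      p a (p b1 b2 b3) c = p (p a b1 c) b2 (p a b3 c)"
    and p_z_middle: "a \<in> A \<Longrightarrow> b \<in> A \<Longrightarrow> p a z b = a"
    and p_u_middle: "a \<in> A \<Longrightarrow> b \<in> A \<Longrightarrow> p a u b = b"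
begin

abbreviation cpl :: "'a \<Rightarrow> 'a" where "cpl a \<equiv> p u a z"
abbreviation mul :: "'a \<Rightarrow> 'a \<Rightarrow> 'a" (infixl "\<odot>" 70) where "a \<odot> b \<equiv> p z a b"
abbreviation add :: "'a \<Rightarrow> 'a \<Rightarrow> 'a" (infixl "\<oplus>" 65) where "a \<oplus> b \<equiv> p a b (cpl a)"

lemma p_cpl_middle: "x \<in> A \<Longrightarrow> y \<in> A \<Longrightarrow> w \<in> A \<Longrightarrow> p x (cpl y) w = p w y x"
  by (simp add: p_middle p_z_middle p_u_middle)

lemma cpl_cpl [simp]: "a \<in> A \<Longrightarrow> cpl (cpl a) = a"
  by (simp add: p_cpl_middle p_z_u)

lemma cpl_z: "cpl z = u"
  by (simp add: p_z_middle)

lemma cpl_u: "cpl u = z"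
  by (simp add: p_u_middle)

lemma cpl_p: "a \<in> A \<Longrightarrow> b \<in> A \<Longrightarrow> c \<in> A \<Longrightarrow> cpl (p a b c) = p (cpl a) b (cpl c)"
  by (simp add: p_middle)

lemma cpl_add: "a \<in> A \<Longrightarrow> b \<in> A \<Longrightarrow> cpl (a \<oplus> b) = p (cpl a) b a"
  using cpl_p[of a b "cpl a"] by simp

lemma p_mul_middle: "x \<in> A \<Longrightarrow> y \<in> A \<Longrightarrow> v \<in> A \<Longrightarrow> w \<in> A \<Longrightarrow> p x (y \<odot> v) w = p x y (p x v w)"
  by (simp add: p_middle p_z_middle)

lemma add_mul: "a \<in> A \<Longrightarrow> y \<in> A \<Longrightarrow> v \<in> A \<Longrightarrow> a \<oplus> (y \<odot> v) = p a y (a \<oplus> v)"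
  by (simp add: p_mul_middle)

lemma cpl_mul: "a \<in> A \<Longrightarrow> b \<in> A \<Longrightarrow> cpl b \<odot> a = p a b z"
  by (simp add: p_cpl_middle)

lemma add_assoc:
  assumes "a \<in> A" "b \<in> A" "c \<in> A"
  shows "(a \<oplus> b) \<oplus> c = a \<oplus> (b \<oplus> c)"
proof -
  have "a \<oplus> (b \<oplus> c) = p (a \<oplus> b) c (p a (cpl b) (cpl a))"
    using assms by (simp add: p_middle)
  also have "p a (cpl b) (cpl a) = cpl (a \<oplus> b)"
    using assms by (simp add: p_cpl_middle cpl_add)
  finally show ?thesis ..
qed

lemma zero_add: "a \<in> A \<Longrightarrow> z \<oplus> a = a"
  by (simp add: cpl_z p_z_u)

lemma add_zero: "a \<in> A \<Longrightarrow> a \<oplus> z = a"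
  by (simp add: p_z_middle)

lemma mul_assoc: "a \<in> A \<Longrightarrow> b \<in> A \<Longrightarrow> c \<in> A \<Longrightarrow> (a \<odot> b) \<odot> c = a \<odot> (b \<odot> c)"
  by (simp add: p_mul_middle)

lemma add_self_if_left_distrib:
  assumes "\<forall>a\<in>A. \<forall>b\<in>A. \<forall>c\<in>A. a \<odot> (b \<oplus> c) = (a \<odot> b) \<oplus> (a \<odot> c)" and "a \<in> A"
  shows "a \<oplus> a = z"
proof -
  have "a \<oplus> a = (a \<odot> u) \<oplus> (a \<odot> u)"
    using \<open>a \<in> A\<close> by (simp add: p_z_u)
  also have "\<dots> = a \<odot> (u \<oplus> u)"
    using assms by simp
  also have "\<dots> = z"
    using \<open>a \<in> A\<close> by (simp add: cpl_u p_u_middle p_idem)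
  finally show ?thesis .
qed

lemma add_self_if_affine:
  assumes "\<forall>a\<in>A. \<forall>b\<in>A. \<forall>c\<in>A. p a b c = (cpl b \<odot> a) \<oplus> (b \<odot> c)" and "a \<in> A"
  shows "a \<oplus> a = z"
proof -
  have "cpl a \<oplus> a = (cpl a \<odot> u) \<oplus> (a \<odot> u)"
    using \<open>a \<in> A\<close> by (simp add: p_z_u)
  also have "\<dots> = p u a u"
    using assms(1)[rule_format, OF u_in \<open>a \<in> A\<close> u_in] by (rule sym)
  also have "\<dots> = u"
    using \<open>a \<in> A\<close> by (simp add: p_idem)
  finally have "cpl (cpl a \<oplus> a) = z"
    by (simp add: cpl_u)
  then show ?thesis
    using \<open>a \<in> A\<close> cpl_add[of "cpl a" a] by simp
qed

end

locale ternary_char2 = ternary +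
  assumes add_self: "a \<in> A \<Longrightarrow> a \<oplus> a = z"
begin

lemma add_cancel_left: "a \<in> A \<Longrightarrow> c \<in> A \<Longrightarrow> a \<oplus> (a \<oplus> c) = c"
  by (metis add_assoc add_self zero_add)

lemma add_left_inj: "a \<in> A \<Longrightarrow> x \<in> A \<Longrightarrow> y \<in> A \<Longrightarrow> a \<oplus> x = a \<oplus> y \<longleftrightarrow> x = y"
  by (metis add_cancel_left)

text \<open>A monoid in which every element is its own inverse is commutative.\<close>
lemma add_commute:
  assumes "a \<in> A" "b \<in> A"
  shows "a \<oplus> b = b \<oplus> a"
proof -
  have "b \<oplus> (a \<oplus> b) = a \<oplus> ((a \<oplus> b) \<oplus> (a \<oplus> b))"
    using assms by (simp add: add_assoc add_cancel_left)
  also have "\<dots> = a"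
    using assms by (simp add: add_self add_zero)
  finally have "b \<oplus> (a \<oplus> b) = a" .
  then show ?thesis
    using assms add_cancel_left[of b "a \<oplus> b"] by simp
qed

lemma cpl_mul_eq_add: "a \<in> A \<Longrightarrow> b \<in> A \<Longrightarrow> cpl b \<odot> a = a \<oplus> (b \<odot> a)"
  by (simp add: cpl_mul add_mul add_self)

lemma p_eq_add_mul: "a \<in> A \<Longrightarrow> b \<in> A \<Longrightarrow> c \<in> A \<Longrightarrow> p a b c = a \<oplus> (b \<odot> (a \<oplus> c))"
  by (simp add: add_mul add_cancel_left)

lemma mul_add_distrib_right:
  assumes "a \<in> A" "b \<in> A" "c \<in> A"
  shows "(a \<oplus> b) \<odot> c = (a \<odot> c) \<oplus> (b \<odot> c)"
proof -
  have "(a \<oplus> b) \<odot> c = p (a \<odot> c) b (cpl a \<odot> c)"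
    using assms by (simp add: p_middle)
  also have "cpl a \<odot> c = (a \<odot> c) \<oplus> c"
    using assms by (simp add: cpl_mul_eq_add add_commute)
  finally show ?thesis
    using assms by (simp add: add_mul)
qed

lemma affine_iff_left_distrib:
  assumes "a \<in> A" "b \<in> A" "c \<in> A"
  shows "p a b c = (cpl b \<odot> a) \<oplus> (b \<odot> c) \<longleftrightarrow> b \<odot> (a \<oplus> c) = (b \<odot> a) \<oplus> (b \<odot> c)"
proof -
  have "p a b c = a \<oplus> (b \<odot> (a \<oplus> c))"
    using assms by (rule p_eq_add_mul)
  moreover have "(cpl b \<odot> a) \<oplus> (b \<odot> c) = a \<oplus> ((b \<odot> a) \<oplus> (b \<odot> c))"
    using assms by (simp add: cpl_mul_eq_add add_assoc)
  ultimately show ?thesis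
    using assms add_left_inj[of a "b \<odot> (a \<oplus> c)" "(b \<odot> a) \<oplus> (b \<odot> c)"] by simp
qed

lemma ring_iff_left_distrib:
  "unitary_ring_char2 A (\<oplus>) (\<odot>) z u \<longleftrightarrow>
     (\<forall>a\<in>A. \<forall>b\<in>A. \<forall>c\<in>A. a \<odot> (b \<oplus> c) = (a \<odot> b) \<oplus> (a \<odot> c))"
proof
  assume distrib: "\<forall>a\<in>A. \<forall>b\<in>A. \<forall>c\<in>A. a \<odot> (b \<oplus> c) = (a \<odot> b) \<oplus> (a \<odot> c)"
  show "unitary_ring_char2 A (\<oplus>) (\<odot>) z u"
    unfolding unitary_ring_char2_def
  proof (intro conjI ballI)
    fix a assume a: "a \<in> A"
    show "z \<oplus> a = a" "a \<oplus> a = z"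
      using a by (simp_all add: zero_add add_self)
    then show "\<exists>b\<in>A. a \<oplus> b = z"
      using a by blast
    show "u \<odot> a = a" "a \<odot> u = a"
      using a by (simp_all add: p_u_middle p_z_u)
    fix b assume b: "b \<in> A"
    show "a \<oplus> b \<in> A" "a \<odot> b \<in> A"
      using a b by simp_all
    show "a \<oplus> b = b \<oplus> a"
      using a b by (rule add_commute)
    fix c assume c: "c \<in> A"
    show "(a \<oplus> b) \<oplus> c = a \<oplus> (b \<oplus> c)"
      using a b c by (rule add_assoc)
    show "(a \<odot> b) \<odot> c = a \<odot> (b \<odot> c)"
      using a b c by (rule mul_assoc)
    show "(a \<oplus> b) \<odot> c = (a \<odot> c) \<oplus> (b \<odot> c)"
      using a b c by (rule mul_add_distrib_right)
    show "a \<odot> (b \<oplus> c) = (a \<odot> b) \<oplus> (a \<odot> c)"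
      using a b c distrib by blast
  qed simp_all
next
  show "\<forall>a\<in>A. \<forall>b\<in>A. \<forall>c\<in>A. a \<odot> (b \<oplus> c) = (a \<odot> b) \<oplus> (a \<odot> c)"
    if "unitary_ring_char2 A (\<oplus>) (\<odot>) z u"
    by (intro ballI) (rule unitary_ring_char2_left_distrib[OF that])
qed

end

theorem theorem2:
  fixes A :: "'a set" and p :: "'a \<Rightarrow> 'a \<Rightarrow> 'a \<Rightarrow> 'a" and z u :: 'a
  assumes closed: "\<forall>a\<in>A. \<forall>b\<in>A. \<forall>c\<in>A. p a b c \<in> A"
    and z_in: "z \<in> A" and u_in: "u \<in> A"
    and T1: "\<forall>a\<in>A. p z a u = a"
    and T2: "\<forall>a\<in>A. \<forall>b\<in>A. p a b a = a"
    and T3: "\<forall>a\<in>A. \<forall>b1\<in>A. \<forall>b2\<in>A. \<forall>b3\<in>A. \<forall>c\<in>A.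
               p a (p b1 b2 b3) c = p (p a b1 c) b2 (p a b3 c)"
    and T4: "\<forall>a\<in>A. \<forall>b\<in>A. p a z b = a \<and> p b u a = a"
  defines "bar \<equiv> \<lambda>a. p u a z"
    and "mul \<equiv> \<lambda>a b. p z a b"
    and "add \<equiv> \<lambda>a b. p a b (p u a z)"
  shows "(unitary_ring_char2 A add mul z u
            \<longleftrightarrow> (\<forall>a\<in>A. \<forall>b\<in>A. \<forall>c\<in>A. p a b c = add (mul (bar b) a) (mul b c)))
       \<and> ((\<forall>a\<in>A. \<forall>b\<in>A. \<forall>c\<in>A. p a b c = add (mul (bar b) a) (mul b c))
            \<longleftrightarrow> (\<forall>a\<in>A. \<forall>b\<in>A. \<forall>c\<in>A. mul a (add b c) = add (mul a b) (mul a c)))"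
proof -
  interpret ternary A p z u
    using closed z_in u_in T1 T2 T3 T4 by unfold_locales blast+
  let ?ring = "unitary_ring_char2 A (\<oplus>) (\<odot>) z u"
  let ?affine = "\<forall>a\<in>A. \<forall>b\<in>A. \<forall>c\<in>A. p a b c = (cpl b \<odot> a) \<oplus> (b \<odot> c)"
  let ?distrib = "\<forall>a\<in>A. \<forall>b\<in>A. \<forall>c\<in>A. a \<odot> (b \<oplus> c) = (a \<odot> b) \<oplus> (a \<odot> c)"
  have "(?ring \<longleftrightarrow> ?distrib) \<and> (?affine \<longleftrightarrow> ?distrib)" if "\<forall>a\<in>A. a \<oplus> a = z"
  proof -
    interpret ternary_char2 A p z u
      using that by unfold_locales blast
    show ?thesis
      using ring_iff_left_distrib affine_iff_left_distrib by blast
  qed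
  moreover have "\<forall>a\<in>A. a \<oplus> a = z" if ?ring
    by (intro ballI) (rule unitary_ring_char2_add_self[OF that])
  moreover have "\<forall>a\<in>A. a \<oplus> a = z" if ?affine
    using that add_self_if_affine by blast
  moreover have "\<forall>a\<in>A. a \<oplus> a = z" if ?distrib
    using that add_self_if_left_distrib by blast
  ultimately show ?thesis
    unfolding bar_def mul_def add_def by blast
qed

end
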